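(* Let $X$ be a compact Hausdorff space with a continuous injective right action of $P$ such that $X\rtimes P$ admits a Haar system, and put $X_0:=X\,Int(P)$. Let $(s_n)$ be a sequence in $Int(P)$ with $s_{n+1}^{-1}s_n\in Int(P)$ for all $n$ and $s_n\to e$, let $a\in Int(P)$, put $t_n:=s_n^{-1}a$ and assume $t_n\in Int(P)$ for all $n$. Then $X_0t_{n+1}\subset X_0t_n$ for every $n$ and $\bigcap_n X_0t_n=Xa$; i.e. the indicator functions $1_{X_0t_n}$ decrease pointwise to $1_{Xa}$.
   Context: Standing assumptions: $G$ is a second countable locally compact group with left Haar measure $dg$; $P\subset G$ is a closed subsemigroup with identity $e\in P$, such that $G=PP^{-1}$ and the interior $Int(P)$ of $P$ is dense in $P$. For $S\subset X$ and $b\in P$, $Sb=\{yb:y\in S\}$; $X_0=\{xb:x\in X,b\in Int(P)\}$. Semidirect product groupoid: for a compact Hausdorff space $X$ with a continuous right action of $P$ such that each $x\mapsto xa$ is injective, $X\rtimes P:=\{(x,g)\in X\times G:\exists a,b\in P,\ y\in X \text{ with } g=ab^{-1},\ xa=yb\}$, with the subspace topology of $X\times G$ and groupoid operations $(x,g,y)(y,h,z)=(x,gh,z)$, $(x,g,y)^{-1}=(y,g^{-1},x)$. For $x\in X$, $Q_x:=\{g:(x,g)\in X\rtimes P\}$ and $\lambda^x$ is given by $\int\phi\,d\lambda^x=\int\phi(x,g)1_{Q_x}(g)\,dg$. "$X\rtimes P$ admits a Haar system" means $x\mapsto\int\phi\,d\lambda^x$ is continuous for every $\phi\in C_c(X\rtimes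 P)$. *)

theory Defs
  imports "HOL-Analysis.Analysis"
begin

text \<open>The group G is a type 'g of class topological_group_add
(written additively but NOT assumed commutative): g h is g + h, h^-1 is - h,
e is 0. The compact Hausdorff space X is the whole type 'x.  The right action
of P is act :: 'x => 'g => 'x (only its values on P matter).\<close>

definition left_haar_measure :: "'g::{topological_group_add,t2_space} measure \<Rightarrow> bool" where
  "left_haar_measure mu \<longleftrightarrow>
     sets mu = sets borel \<and>
     (\<forall>g. \<forall>A\<in>sets borel. emeasure mu ((\<lambda>h. g + h) ` A) = emeasure mu A) \<and>
     (\<forall>K. compact K \<longrightarrow> emeasure mu K < \<infinity>) \<and>
     (\<forall>U. open U \<and> U \<noteq> {} \<longrightarrow> emeasure mu U > 0) \<and>
     (\<forall>A\<in>sets borel. emeasure mu A = (INF U\<in>{U. open U \<and> A \<subseteq> U}. emeasure mu U)) \<and>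
     (\<forall>U. open U \<longrightarrow> emeasure mu U = (SUP K\<in>{K. compact K \<and> K \<subseteq> U}. emeasure mu K))"

definition standing_semigroup :: "'g::{topological_group_add,t2_space} set \<Rightarrow> bool" where
  "standing_semigroup P \<longleftrightarrow>
     closed P \<and> 0 \<in> P \<and> (\<forall>a\<in>P. \<forall>b\<in>P. a + b \<in> P) \<and>
     (\<forall>g. \<exists>a\<in>P. \<exists>b\<in>P. g = a + - b) \<and>
     P \<subseteq> closure (interior P)"

definition cont_inj_right_action :: "'g::topological_group_add set \<Rightarrow> ('x::topological_space \<Rightarrow> 'g \<Rightarrow> 'x) \<Rightarrow> bool" where
  "cont_inj_right_action P act \<longleftrightarrow>
     (\<forall>x. act x 0 = x) \<and>
     (\<forall>x. \<forall>a\<in>P. \<forall>b\<in>P. act (act x a) b = act x (a + b)) \<and>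
     continuous_on (UNIV \<times> P) (\<lambda>(x, a). act x a) \<and>
     (\<forall>a\<in>P. inj (\<lambda>x. act x a))"

definition sdp :: "'g::group_add set \<Rightarrow> ('x \<Rightarrow> 'g \<Rightarrow> 'x) \<Rightarrow> ('x \<times> 'g) set" where
  "sdp P act = {(x, g). \<exists>a\<in>P. \<exists>b\<in>P. \<exists>y. g = a + - b \<and> act x a = act y b}"

definition Qset :: "'g::group_add set \<Rightarrow> ('x \<Rightarrow> 'g \<Rightarrow> 'x) \<Rightarrow> 'x \<Rightarrow> 'g set" where
  "Qset P act x = {g. (x, g) \<in> sdp P act}"

definition Cc_on :: "('a::topological_space) set \<Rightarrow> ('a \<Rightarrow> complex) set" where
  "Cc_on S = {phi. continuous_on S phi \<and> (\<exists>K. compact K \<and> K \<subseteq> S \<and> (\<forall>p\<in>S - K. phi p = 0))}"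

definition admits_haar_system ::
  "'g::{topological_group_add,t2_space} measure \<Rightarrow> 'g set \<Rightarrow> ('x::topological_space \<Rightarrow> 'g \<Rightarrow> 'x) \<Rightarrow> bool" where
  "admits_haar_system mu P act \<longleftrightarrow>
     (\<forall>phi\<in>Cc_on (sdp P act).
        continuous_on UNIV (\<lambda>x. integral\<^sup>L mu (\<lambda>g. indicator (Qset P act x) g * phi (x, g))))"

definition act_set :: "('x \<Rightarrow> 'g \<Rightarrow> 'x) \<Rightarrow> 'x set \<Rightarrow> 'g \<Rightarrow> 'x set" where
  "act_set act S b = (\<lambda>y. act y b) ` S"

definition X0 :: "'g::topological_space set \<Rightarrow> ('x \<Rightarrow> 'g \<Rightarrow> 'x) \<Rightarrow> 'x set" where
  "X0 P act = {act x b | x b. b \<in> interior P}"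

end

theory Submission
  imports Defs
begin

text \<open>
  Write \<open>X g\<close> for the image of the whole space under \<open>x \<mapsto> x g\<close> and \<open>X\<^sub>0 g\<close>
  for the image of \<open>X\<^sub>0 = X Int(P)\<close>.  The proof has three ingredients.
  (1) \<open>Int(P) P \<subseteq> Int(P)\<close>, since right translations of G are continuous;
      hence \<open>X\<^sub>0 (c t) \<subseteq> X\<^sub>0 t\<close> for \<open>c \<in> P\<close>.  As \<open>t\<^sub>n\<^sub>+\<^sub>1 = (s\<^sub>n\<^sub>+\<^sub>1\<inverse> s\<^sub>n) t\<^sub>n\<close>,
      the sets \<open>X\<^sub>0 t\<^sub>n\<close> decrease.
  (2) \<open>X a = X (s\<^sub>n t\<^sub>n) \<subseteq> X\<^sub>0 t\<^sub>n\<close> because \<open>s\<^sub>n \<in> Int(P)\<close>.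
  (3) For \<open>z\<close> fixed and \<open>K \<subseteq> P\<close> compact, the parameters \<open>g \<in> K\<close> with
      \<open>z \<in> X g\<close> form a compact set (projection of a closed subset of the
      compact space \<open>X \<times> K\<close>).  Taking \<open>K = {a} \<union> {t\<^sub>n}\<close>, which is compact since
      \<open>t\<^sub>n \<rightarrow> a\<close>, a point in every \<open>X\<^sub>0 t\<^sub>n \<subseteq> X t\<^sub>n\<close> also lies in \<open>X a\<close>.
\<close>

lemma compact_insert_limit:
  fixes f :: "nat \<Rightarrow> 'a::topological_space"
  assumes "f \<longlonglongrightarrow> l"
  shows "compact (insert l (range f))"
proof -
  have "compactin euclidean (insert l (range f))"
    by (rule compactin_sequence_with_limit) (use assms in \<open>auto simp: limitin_canonical_iff\<close>)
  then show ?thesis by (simp add: compactin_euclidean_iff)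
qed

lemma interior_add_semigroup:
  fixes P :: "'g::topological_group_add set"
  assumes closed_add: "\<And>x y. x \<in> P \<Longrightarrow> y \<in> P \<Longrightarrow> x + y \<in> P"
    and b: "b \<in> interior P" and c: "c \<in> P"
  shows "b + c \<in> interior P"
proof -
  let ?U = "(\<lambda>h. h + - c) -` interior P"
  have "continuous_on UNIV (\<lambda>h. h + - c)" by (intro continuous_intros)
  then have "open ?U"
    using continuous_on_open_vimage[of UNIV "\<lambda>h. h + - c"] by simp
  moreover have "?U \<subseteq> P"
  proof
    fix h assume "h \<in> ?U"
    then have "(h + - c) + c \<in> P" using closed_add c interior_subset by blast
    then show "h \<in> P" by (simp add: add.assoc)
  qed
  moreover have "b + c \<in> ?U" using b by (simp add: add.assoc)
  ultimately show ?thesis by (meson interior_maximal subsetD)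
qed

text \<open>Translating \<open>X\<^sub>0\<close> further along an element of \<open>P\<close> shrinks it:
  \<open>X\<^sub>0 (c t) \<subseteq> X\<^sub>0 t\<close>, because \<open>Int(P) c \<subseteq> Int(P)\<close>.\<close>
lemma X0_translate_mono:
  fixes P :: "'g::topological_group_add set" and act :: "'x \<Rightarrow> 'g \<Rightarrow> 'x"
  assumes closed_add: "\<And>x y. x \<in> P \<Longrightarrow> y \<in> P \<Longrightarrow> x + y \<in> P"
    and compose: "\<And>x g h. g \<in> P \<Longrightarrow> h \<in> P \<Longrightarrow> act (act x g) h = act x (g + h)"
    and c: "c \<in> P" and t: "t \<in> P"
  shows "act_set act (X0 P act) (c + t) \<subseteq> act_set act (X0 P act) t"
proof
  fix z assume "z \<in> act_set act (X0 P act) (c + t)"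
  then obtain x b where b: "b \<in> interior P" and z: "z = act (act x b) (c + t)"
    by (auto simp: act_set_def X0_def)
  have bc: "b + c \<in> interior P" by (rule interior_add_semigroup[OF closed_add b c])
  have b_in_P: "b \<in> P" and bc_in_P: "b + c \<in> P" using b bc interior_subset by blast+
  have "z = act x (b + (c + t))" using z compose b_in_P c t closed_add by simp
  also have "\<dots> = act (act x (b + c)) t" using compose bc_in_P t by (simp add: add.assoc)
  finally show "z \<in> act_set act (X0 P act) t"
    using bc by (auto simp: act_set_def X0_def)
qed

lemma act_set_UNIV_subset_X0:
  fixes P :: "'g::topological_group_add set" and act :: "'x \<Rightarrow> 'g \<Rightarrow> 'x"
  assumes compose: "\<And>x g h. g \<in> P \<Longrightarrow> h \<in> P \<Longrightarrow> act (act x g) h = act x (g + h)"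
    and s: "s \<in> interior P" and t: "t \<in> P"
  shows "act_set act UNIV (s + t) \<subseteq> act_set act (X0 P act) t"
proof
  fix z assume "z \<in> act_set act UNIV (s + t)"
  then obtain y where "z = act y (s + t)" by (auto simp: act_set_def)
  moreover have "s \<in> P" using s interior_subset by blast
  ultimately have "z = act (act y s) t" using compose t by simp
  then show "z \<in> act_set act (X0 P act) t"
    using s unfolding act_set_def X0_def by blast
qed

text \<open>For a continuous action on a compact space and a compact \<open>K \<subseteq> P\<close>, the
  parameters \<open>g \<in> K\<close> whose translate \<open>X g\<close> contains a given point form a
  compact set: they are the projection of a closed subset of \<open>X \<times> K\<close>.\<close>
lemma hitting_parameters_compact:
  fixes act :: "'x::t1_space \<Rightarrow> 'g::t2_space \<Rightarrow> 'x" and K :: "'g set"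
  assumes X_compact: "compact (UNIV :: 'x set)"
    and cont: "continuous_on (UNIV \<times> P) (\<lambda>(x, g). act x g)"
    and K: "compact K" "K \<subseteq> P"
  shows "compact {g \<in> K. z \<in> act_set act UNIV g}"
proof -
  define f where "f = (\<lambda>(x, g). act x g :: 'x)"
  have cont_K: "continuous_on (UNIV \<times> K) f"
    unfolding f_def by (rule continuous_on_subset[OF cont]) (use K in auto)
  have compact_XK: "compact ((UNIV::'x set) \<times> K)" using compact_Times[OF X_compact K(1)] .
  have "closed ((UNIV \<times> K) \<inter> f -` {z})"
    by (rule continuous_closed_preimage[OF cont_K]) (auto simp: closed_Times compact_imp_closed K)
  then have "compact ((UNIV \<times> K) \<inter> f -` {z})"
    using compact_Int_closed[OF compact_XK] by (metis Int_assoc Int_absorb)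
  then have "compact (snd ` ((UNIV \<times> K) \<inter> f -` {z}))"
    by (rule compact_continuous_image[rotated]) (intro continuous_intros)
  moreover have "snd ` ((UNIV \<times> K) \<inter> f -` {z}) = {g \<in> K. z \<in> act_set act UNIV g}"
    by (force simp: f_def act_set_def)
  ultimately show ?thesis by simp
qed

lemma act_set_UNIV_limit:
  fixes act :: "'x::t1_space \<Rightarrow> 'g::t2_space \<Rightarrow> 'x"
  assumes X_compact: "compact (UNIV :: 'x set)"
    and cont: "continuous_on (UNIV \<times> P) (\<lambda>(x, g). act x g)"
    and lim: "t \<longlonglongrightarrow> a" and t_in_P: "range t \<subseteq> P" and a_in_P: "a \<in> P"
    and z: "\<And>n. z \<in> act_set act UNIV (t n)"
  shows "z \<in> act_set act UNIV a"
proof -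
  let ?K = "insert a (range t)"
  have "compact {g \<in> ?K. z \<in> act_set act UNIV g}"
    by (rule hitting_parameters_compact[OF X_compact cont compact_insert_limit[OF lim]])
      (use t_in_P a_in_P in auto)
  then have "closed {g \<in> ?K. z \<in> act_set act UNIV g}" by (rule compact_imp_closed)
  moreover have "\<And>n. t n \<in> {g \<in> ?K. z \<in> act_set act UNIV g}" using z by auto
  ultimately show ?thesis using closed_sequentially[OF _ _ lim] by blast
qed

theorem mainTheorem13:
  fixes mu :: "'g::{topological_group_add,t2_space,second_countable_topology} measure"
    and P :: "'g set"
    and act :: "'x::t2_space \<Rightarrow> 'g \<Rightarrow> 'x"
    and s t :: "nat \<Rightarrow> 'g" and a :: 'g
  assumes "locally_compact_space (euclidean :: 'g topology)"
    and "left_haar_measure mu"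
    and "standing_semigroup P"
    and "compact (UNIV :: 'x set)"
    and "cont_inj_right_action P act"
    and "admits_haar_system mu P act"
    and "\<And>n. s n \<in> interior P"
    and "\<And>n. - s (Suc n) + s n \<in> interior P"
    and "s \<longlonglongrightarrow> 0"
    and "a \<in> interior P"
    and "\<And>n. t n = - s n + a"
    and "\<And>n. t n \<in> interior P"
  shows "(\<forall>n. act_set act (X0 P act) (t (Suc n)) \<subseteq> act_set act (X0 P act) (t n))
     \<and> (\<Inter>n. act_set act (X0 P act) (t n)) = act_set act UNIV a"
proof -
  have closed_add: "\<And>x y. x \<in> P \<Longrightarrow> y \<in> P \<Longrightarrow> x + y \<in> P"
    using assms(3) by (auto simp: standing_semigroup_def)
  have compose: "\<And>x g h. g \<in> P \<Longrightarrow> h \<in> P \<Longrightarrow> act (act x g) h = act x (g + h)"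
    and cont: "continuous_on (UNIV \<times> P) (\<lambda>(x, g). act x g)"
    using assms(5) by (auto simp: cont_inj_right_action_def)
  have t_in_P: "t n \<in> P" for n using assms(12) interior_subset by blast
  have decreasing: "act_set act (X0 P act) (t (Suc n)) \<subseteq> act_set act (X0 P act) (t n)" for n
  proof -
    have "- s (Suc n) + s n \<in> P" using assms(8) interior_subset by blast
    moreover have "t (Suc n) = (- s (Suc n) + s n) + t n" using assms(11) by (simp add: add.assoc)
    ultimately show ?thesis using X0_translate_mono[OF closed_add compose _ t_in_P] by simp
  qed
  have lower: "act_set act UNIV a \<subseteq> act_set act (X0 P act) (t n)" for n
  proof -
    have "s n + t n = a" using assms(11) by (simp add: add.assoc[symmetric])
    then show ?thesis using act_set_UNIV_subset_X0[OF compose assms(7)[of n] t_in_P[of n]] by simp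
  qed
  have "t \<longlonglongrightarrow> - 0 + a" unfolding assms(11)[abs_def] by (intro tendsto_intros assms(9))
  then have lim: "t \<longlonglongrightarrow> a" by simp
  have upper: "z \<in> act_set act UNIV a" if z: "z \<in> (\<Inter>n. act_set act (X0 P act) (t n))" for z
  proof (rule act_set_UNIV_limit[OF assms(4) cont lim])
    show "range t \<subseteq> P" and "a \<in> P" using t_in_P assms(10) interior_subset by blast+
    show "z \<in> act_set act UNIV (t n)" for n
      using z by (auto simp: act_set_def)
  qed
  show ?thesis using decreasing lower upper by blast
qed

end
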